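(* Let $\kappa>0$, $q:=e^{-2\kappa}$, $\gamma_n:=\tanh(\kappa n)$, and for $n,k\in\mathbb{N}$ and $t\ge0$ let \[ q_n^{(k)}(t):=\sqrt{\frac{\gamma_n}{\gamma_k}}\int_0^{\pi}e^{-t(1-\cos\theta)}P_n(\theta)P_k(\theta)\,{\rm d}\mu(\theta). \] Let $\ell\in\mathbb{N}$. Then for every $n\in\mathbb{N}$ and $t$ there is a constant $C_{n,\ell}(q,t)$, not depending on $k$, such that \[ \bigl|q_n^{(k)}(t)\bigr|\le\frac{C_{n,\ell}(q,t)}{k^{\ell}}\quad\text{for all }k\in\mathbb{N}. \]
   Context: $(a;q)_n:=\prod_{j=0}^{n-1}(1-aq^j)$, $n\in\mathbb{N}_0\cup\{\infty\}$. For $n\in\mathbb{N}$ and $\theta\in\mathbb{R}$, $P_n(\theta):=\sqrt{\gamma_1/\gamma_n}\sum_{k=0}^{n-1}\frac{(-q;q)_k(-q;q)_{n-1-k}}{(q;q)_k(q;q)_{n-1-k}}\cos((2k-n+1)\theta)$. The measure $\mu$ on $(0,\pi)$ is given by \[ \frac{{\rm d}\mu}{{\rm d}\theta}(\theta)=\frac{2}{\pi\gamma_1}\sin^2(\theta)\left|\frac{(q,qe^{2{\rm i}\theta};q)_\infty}{(-q,-qe^{2{\rm i}\theta};q)_\infty}\right|^2. \] ($q_n^{(k)}$ is the solution of $\dot q_n=-q_n+\frac{\gamma_n}{2}(q_{n-1}+q_{n+1})$, $q_0=0$, with $q_n^{(k)}(0)=\delta_{k,n}$.) *)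

theory Defs
  imports "HOL-Analysis.Analysis"
begin

definition qpoch :: "real \<Rightarrow> real \<Rightarrow> nat \<Rightarrow> real" where
  "qpoch a q n = (\<Prod>j<n. 1 - a * q ^ j)"

definition cqpoch_inf :: "complex \<Rightarrow> complex \<Rightarrow> complex" where
  "cqpoch_inf a q = (\<Prod>j. 1 - a * q ^ j)"

definition gam :: "real \<Rightarrow> nat \<Rightarrow> real" where
  "gam \<kappa> n = tanh (\<kappa> * real n)"

definition qpar :: "real \<Rightarrow> real" where
  "qpar \<kappa> = exp (- 2 * \<kappa>)"

text \<open>P_n(theta), for n >= 1.\<close>
definition Ppoly :: "real \<Rightarrow> nat \<Rightarrow> real \<Rightarrow> real" where
  "Ppoly \<kappa> n \<theta> = sqrt (gam \<kappa> 1 / gam \<kappa> n) *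
     (\<Sum>k<n. qpoch (- qpar \<kappa>) (qpar \<kappa>) k * qpoch (- qpar \<kappa>) (qpar \<kappa>) (n - 1 - k)
              / (qpoch (qpar \<kappa>) (qpar \<kappa>) k * qpoch (qpar \<kappa>) (qpar \<kappa>) (n - 1 - k))
              * cos ((2 * real k - real n + 1) * \<theta>))"

definition mu_dens :: "real \<Rightarrow> real \<Rightarrow> real" where
  "mu_dens \<kappa> \<theta> = 2 / (pi * gam \<kappa> 1) * (sin \<theta>)\<^sup>2 *
     (cmod ((cqpoch_inf (of_real (qpar \<kappa>)) (of_real (qpar \<kappa>)) *
             cqpoch_inf (of_real (qpar \<kappa>) * exp (2 * \<i> * of_real \<theta>)) (of_real (qpar \<kappa>)))
          / (cqpoch_inf (- of_real (qpar \<kappa>)) (of_real (qpar \<kappa>)) *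
             cqpoch_inf (- of_real (qpar \<kappa>) * exp (2 * \<i> * of_real \<theta>)) (of_real (qpar \<kappa>)))))\<^sup>2"

definition qsol :: "real \<Rightarrow> nat \<Rightarrow> nat \<Rightarrow> real \<Rightarrow> real" where
  "qsol \<kappa> n k t = sqrt (gam \<kappa> n / gam \<kappa> k) *
     (LBINT \<theta>=0..pi. exp (- t * (1 - cos \<theta>)) * Ppoly \<kappa> n \<theta> * Ppoly \<kappa> k \<theta> * mu_dens \<kappa> \<theta>)"

end

theory Submission
  imports Defs "HOL-Complex_Analysis.Complex_Analysis"
begin

(* The integrand e^{-t(1 - cos theta)} P_n P_k mu' equals sin^2 theta * W(theta) * P_k(theta), and in
   z = e^{i theta} the function W extends holomorphically to the annulus sqrt q < |z| < 1/sqrt q, since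
   the denominators (-q z^{2};q)_oo and (-q z^{-2};q)_oo have no zeros there. Moving the circle of
   integration to |z| = r by Cauchy's theorem, the Fourier coefficients of sin^2 theta * W and of
   sin theta * W decay like r^m for every r > sqrt q. Up to a bounded factor, P_k(theta) is
   sum_j a_j a_{k-1-j} cos((2j-k+1) theta) with a_j = (-q;q)_j/(q;q)_j converging geometrically.
   Replacing every a_j a_{k-1-j} by a_k^2 turns the sum into sin(k theta)/sin theta, whose coefficient
   decays like r^k; each remaining term is small either because j and k-1-j are both large (then
   a_j a_{k-1-j} is close to a_k^2) or because |2j-k+1| is large (Fourier decay). Hence
   q_n^{(k)}(t) = O(k r^{(k-1)/2}), which is O(k^{-l}) for every l. *)

section \<open>Infinite q-Pochhammer products\<close>

lemma convergent_prod_qpoch: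
  fixes a c :: complex
  assumes "norm c < 1"
  shows "convergent_prod (\<lambda>j. 1 - a * c ^ j)"
proof -
  have "summable (\<lambda>j. norm a * norm c ^ j)"
    using assms by (intro summable_mult summable_geometric) auto
  then have "summable (\<lambda>j. norm ((1 - a * c ^ j) - 1))"
    by (simp add: norm_mult norm_power)
  then show ?thesis
    by (intro abs_convergent_prod_imp_convergent_prod summable_imp_abs_convergent_prod)
qed

lemma qpoch_tendsto_cqpoch_inf:
  fixes a c :: complex
  assumes "norm c < 1"
  shows "(\<lambda>n. \<Prod>j<n. 1 - a * c ^ j) \<longlonglongrightarrow> cqpoch_inf a c"
proof -
  have "(\<lambda>n. \<Prod>j<Suc n. 1 - a * c ^ j) \<longlonglongrightarrow> cqpoch_inf a c"
    unfolding cqpoch_inf_def lessThan_Suc_atMost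
    by (rule convergent_prod_LIMSEQ[OF convergent_prod_qpoch[OF assms]])
  then show ?thesis
    by (rule LIMSEQ_imp_Suc)
qed

lemma cnj_cqpoch_inf:
  assumes "\<bar>q\<bar> < 1"
  shows "cnj (cqpoch_inf a (of_real q)) = cqpoch_inf (cnj a) (of_real q)"
proof -
  have q: "norm (complex_of_real q) < 1"
    using assms by simp
  have "(\<lambda>n. cnj (\<Prod>j<n. 1 - a * of_real q ^ j)) \<longlonglongrightarrow> cnj (cqpoch_inf a (of_real q))"
    by (intro tendsto_cnj qpoch_tendsto_cqpoch_inf q)
  then have "(\<lambda>n. \<Prod>j<n. 1 - cnj a * of_real q ^ j) \<longlonglongrightarrow> cnj (cqpoch_inf a (of_real q))"
    by (simp add: cnj_prod)
  with qpoch_tendsto_cqpoch_inf[OF q] show ?thesis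
    using LIMSEQ_unique by blast
qed

lemma cqpoch_inf_nonzero:
  fixes a c :: complex
  assumes "norm c < 1" "norm a < 1"
  shows "cqpoch_inf a c \<noteq> 0"
  unfolding cqpoch_inf_def
proof (rule prodinf_nonzero[OF convergent_prod_qpoch[OF assms(1)]])
  fix j
  have "norm (a * c ^ j) \<le> norm a"
    using assms by (simp add: norm_mult norm_power mult_left_le power_le_one)
  then show "1 - a * c ^ j \<noteq> 0"
    using assms(2) by auto
qed

lemma cqpoch_inf_holomorphic_on_UNIV:
  fixes c :: complex
  assumes "norm c < 1"
  shows "(\<lambda>a. cqpoch_inf a c) holomorphic_on UNIV"
proof (rule holomorphic_uniform_sequence[where f = "\<lambda>N a. \<Prod>j<N. 1 - a * c ^ j"])
  fix x :: complex
  have "uniformly_convergent_on (cball x 1) (\<lambda>N a. \<Prod>j<N. 1 + (- (a * c ^ j)))"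
  proof (rule uniformly_convergent_on_prod)
    show "uniformly_convergent_on (cball x 1) (\<lambda>N a. \<Sum>j<N. norm (- (a * c ^ j)))"
    proof (rule Weierstrass_m_test'[where M = "\<lambda>j. (norm x + 1) * norm c ^ j"])
      fix j a
      assume "a \<in> cball x 1"
      then have "norm a \<le> norm x + 1"
        by (metis dist_commute dist_norm mem_cball norm_triangle_sub add_le_cancel_left order_trans)
      then show "norm (norm (- (a * c ^ j))) \<le> (norm x + 1) * norm c ^ j"
        by (simp add: norm_mult norm_power mult_right_mono)
    next
      show "summable (\<lambda>j. (norm x + 1) * norm c ^ j)"
        using assms by (intro summable_mult summable_geometric) auto
    qed
  qed (auto intro!: continuous_intros)
  then have "uniform_limit (cball x 1) (\<lambda>N a. \<Prod>j<N. 1 - a * c ^ j)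
               (\<lambda>a. lim (\<lambda>N. \<Prod>j<N. 1 - a * c ^ j)) sequentially"
    by (simp add: uniformly_convergent_uniform_limit_iff)
  moreover have "lim (\<lambda>N. \<Prod>j<N. 1 - a * c ^ j) = cqpoch_inf a c" for a
    using qpoch_tendsto_cqpoch_inf[OF assms] by (rule limI)
  ultimately show "\<exists>d>0. cball x d \<subseteq> UNIV \<and>
      uniform_limit (cball x d) (\<lambda>N a. \<Prod>j<N. 1 - a * c ^ j) (\<lambda>a. cqpoch_inf a c) sequentially"
    by (intro exI[of _ 1]) simp
qed (auto intro!: holomorphic_intros)

lemma cqpoch_inf_holomorphic [holomorphic_intros]:
  fixes c :: complex
  assumes "norm c < 1" "g holomorphic_on A"
  shows "(\<lambda>z. cqpoch_inf (g z) c) holomorphic_on A"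
  using holomorphic_on_compose[OF assms(2) holomorphic_on_subset[OF cqpoch_inf_holomorphic_on_UNIV[OF assms(1)]]]
  by (simp add: o_def)

section \<open>The coefficients of \<open>P\<^sub>n\<close>\<close>

definition qcoef :: "real \<Rightarrow> nat \<Rightarrow> real" where
  "qcoef q j = qpoch (- q) q j / qpoch q q j"

lemma qpoch_Suc: "qpoch a q (Suc n) = qpoch a q n * (1 - a * q ^ n)"
  by (simp add: qpoch_def)

context
  fixes q :: real
  assumes q: "0 < q" "q < 1"
begin

lemma qcoef_pos: "0 < qcoef q j"
proof -
  have "q * q ^ i < 1" for i
    using power_Suc_less_one[OF q] by simp
  then show ?thesis
    using q by (auto simp: qcoef_def qpoch_def intro!: prod_pos divide_pos_pos add_pos_nonneg)
qed

lemma qcoef_Suc: "qcoef q (Suc j) = qcoef q j * ((1 + q ^ Suc j) / (1 - q ^ Suc j))"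
proof -
  have "q ^ Suc j < 1"
    by (rule power_Suc_less_one[OF q])
  then show ?thesis
    using q by (simp add: qcoef_def qpoch_Suc field_simps)
qed

lemma qcoef_factor_le: "(1 + q ^ Suc i) / (1 - q ^ Suc i) \<le> exp (2 * q ^ i / (1 - q))"
proof -
  have "q * q ^ i \<le> q * 1"
    using q by (intro mult_left_mono power_le_one) auto
  then have p: "0 < q ^ Suc i" "q ^ Suc i < 1" "q ^ Suc i \<le> q ^ i" "q ^ Suc i \<le> q"
    using q power_Suc_less_one[OF q] by (auto intro: mult_left_le_one_le)
  then have "(1 + q ^ Suc i) / (1 - q ^ Suc i) = 1 + 2 * q ^ Suc i / (1 - q ^ Suc i)"
    using q by (simp add: field_simps del: power_Suc)
  also have "\<dots> \<le> 1 + 2 * q ^ i / (1 - q)"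
    using p q by (intro add_left_mono frac_le) auto
  also have "\<dots> \<le> exp (2 * q ^ i / (1 - q))"
    by (rule exp_ge_add_one_self)
  finally show ?thesis .
qed

lemma qcoef_mono: "j \<le> j' \<Longrightarrow> qcoef q j \<le> qcoef q j'"
proof (induction j' rule: dec_induct)
  case (step i)
  have "1 \<le> (1 + q ^ Suc i) / (1 - q ^ Suc i)"
    using q power_Suc_less_one[OF q, of i] by (simp add: field_simps del: power_Suc)
  then have "qcoef q i * 1 \<le> qcoef q (Suc i)"
    unfolding qcoef_Suc using qcoef_pos[of i] by (intro mult_left_mono) auto
  with step.IH show ?case
    by linarith
qed simp

lemma qcoef_add_le: "qcoef q (j + k) \<le> qcoef q j * exp (2 * q ^ j * (1 - q ^ k) / (1 - q)\<^sup>2)"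
proof (induction k)
  case (Suc k)
  have "2 * q ^ (j + k) / (1 - q) = 2 * q ^ (j + k) * (1 - q) / (1 - q)\<^sup>2"
    using q by (simp add: power2_eq_square)
  moreover have "2 * q ^ j * (1 - q ^ k) + 2 * q ^ (j + k) * (1 - q) = 2 * q ^ j * (1 - q ^ Suc k)"
    by (simp add: algebra_simps power_add)
  ultimately have expo: "2 * q ^ j * (1 - q ^ k) / (1 - q)\<^sup>2 + 2 * q ^ (j + k) / (1 - q)
      = 2 * q ^ j * (1 - q ^ Suc k) / (1 - q)\<^sup>2"
    by (simp only: add_divide_distrib[symmetric])
  have "qcoef q (j + Suc k) = qcoef q (j + k) * ((1 + q ^ Suc (j + k)) / (1 - q ^ Suc (j + k)))"
    by (simp add: qcoef_Suc)
  also have "\<dots> \<le> (qcoef q j * exp (2 * q ^ j * (1 - q ^ k) / (1 - q)\<^sup>2)) * exp (2 * q ^ (j + k) / (1 - q))"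
    using Suc.IH qcoef_factor_le[of "j + k"] qcoef_pos[of "j + k"] power_Suc_less_one[OF q, of "j + k"] q
    by (intro mult_mono) (auto simp del: power_Suc intro!: divide_nonneg_pos add_nonneg_nonneg)
  also have "\<dots> = qcoef q j * exp (2 * q ^ j * (1 - q ^ Suc k) / (1 - q)\<^sup>2)"
    unfolding mult.assoc[of "qcoef q j"] exp_add[symmetric] expo ..
  finally show ?case .
qed simp

lemma qcoef_le_exp:
  assumes "j \<le> j'"
  shows "qcoef q j' \<le> qcoef q j * exp (2 * q ^ j / (1 - q)\<^sup>2)"
proof -
  obtain k where k: "j' = j + k"
    using le_Suc_ex[OF assms] by blast
  have "2 * q ^ j * (1 - q ^ k) / (1 - q)\<^sup>2 \<le> 2 * q ^ j / (1 - q)\<^sup>2"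
    using q by (intro divide_right_mono mult_left_le) auto
  then have "qcoef q j * exp (2 * q ^ j * (1 - q ^ k) / (1 - q)\<^sup>2) \<le> qcoef q j * exp (2 * q ^ j / (1 - q)\<^sup>2)"
    using qcoef_pos[of j] by simp
  with qcoef_add_le[of j k] show ?thesis
    unfolding k by linarith
qed

lemma qcoef_le: "qcoef q j \<le> exp (2 / (1 - q)\<^sup>2)"
  using qcoef_le_exp[of 0 j] by (simp add: qcoef_def qpoch_def)

lemma qcoef_diff_le:
  assumes "j \<le> j'"
  shows "\<bar>qcoef q j' - qcoef q j\<bar> \<le> exp (2 / (1 - q)\<^sup>2) ^ 2 * (2 / (1 - q)\<^sup>2) * q ^ j"
proof -
  define B where "B = exp (2 / (1 - q)\<^sup>2)"
  define x where "x = 2 * q ^ j / (1 - q)\<^sup>2"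
  have x: "0 \<le> x" "x \<le> 2 / (1 - q)\<^sup>2"
    using q by (auto simp: x_def divide_right_mono power_le_one)
  have "(1 - x) * exp x \<le> exp (- x) * exp x"
    using exp_ge_add_one_self[of "- x"] by (intro mult_right_mono) auto
  then have "exp x - 1 \<le> x * exp x"
    by (simp add: exp_minus field_simps)
  also have "\<dots> \<le> x * B"
    using x by (auto simp: B_def intro: mult_left_mono)
  finally have "qcoef q j * (exp x - 1) \<le> B * (x * B)"
    using qcoef_pos[of j] qcoef_le[of j] x by (intro mult_mono) (auto simp: B_def)
  moreover have "qcoef q j' - qcoef q j \<le> qcoef q j * (exp x - 1)"
    using qcoef_le_exp[OF assms] by (simp add: x_def algebra_simps)
  ultimately show ?thesis
    using qcoef_mono[OF assms] by (simp add: B_def x_def power2_eq_square field_simps)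
qed

lemma qcoef_product_diff:
  "\<exists>D\<ge>0. \<forall>k j. j < k \<longrightarrow> \<bar>qcoef q j * qcoef q (k - 1 - j) - (qcoef q k)\<^sup>2\<bar> \<le> D * (q ^ j + q ^ (k - 1 - j))"
proof -
  define B where "B = exp (2 / (1 - q)\<^sup>2)"
  define C where "C = B ^ 2 * (2 / (1 - q)\<^sup>2)"
  have "\<bar>qcoef q j * qcoef q (k - 1 - j) - (qcoef q k)\<^sup>2\<bar> \<le> B * C * (q ^ j + q ^ (k - 1 - j))"
    if "j < k" for j k
  proof -
    have "\<bar>qcoef q j * qcoef q (k - 1 - j) - (qcoef q k)\<^sup>2\<bar>
        = \<bar>qcoef q j * (qcoef q (k - 1 - j) - qcoef q k) + qcoef q k * (qcoef q j - qcoef q k)\<bar>"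
      by (simp add: algebra_simps power2_eq_square)
    also have "\<dots> \<le> qcoef q j * \<bar>qcoef q k - qcoef q (k - 1 - j)\<bar> + qcoef q k * \<bar>qcoef q k - qcoef q j\<bar>"
      using qcoef_pos[of j] qcoef_pos[of k]
      by (intro order_trans[OF abs_triangle_ineq]) (simp add: abs_mult abs_minus_commute)
    also have "\<dots> \<le> B * (C * q ^ (k - 1 - j)) + B * (C * q ^ j)"
      using that qcoef_pos[of j] qcoef_pos[of k] qcoef_le[of j] qcoef_le[of k]
      unfolding B_def C_def by (intro add_mono mult_mono qcoef_diff_le) auto
    finally show ?thesis
      by (simp add: algebra_simps)
  qed
  moreover have "0 \<le> B * C"
    by (simp add: B_def C_def)
  ultimately show ?thesis
    by blast
qed

end

section \<open>Fourier coefficients of functions holomorphic near an annulus\<close>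

lemma contour_integral_circlepath_0:
  fixes \<Phi> :: "complex \<Rightarrow> complex"
  assumes "\<rho> > 0"
  shows "contour_integral (circlepath 0 \<rho>) (\<lambda>z. \<Phi> z * z ^ m / z)
       = \<i> * of_real \<rho> ^ m * integral {0..2*pi} (\<lambda>t. \<Phi> (of_real \<rho> * cis t) * cis t ^ m)"
proof -
  have "contour_integral (circlepath 0 \<rho>) (\<lambda>z. \<Phi> z * z ^ m / z)
      = integral {0..2*pi} (\<lambda>t. \<Phi> (0 + \<rho> * cis t) * (0 + \<rho> * cis t) ^ m / (0 + \<rho> * cis t) * \<rho> * \<i> * cis t)"
    unfolding circlepath_def by (rule contour_integral_part_circlepath_eq) simp
  also have "\<dots> = integral {0..2*pi} (\<lambda>t. (\<i> * of_real \<rho> ^ m) * (\<Phi> (of_real \<rho> * cis t) * cis t ^ m))"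
    using assms by (intro integral_cong) (auto simp: field_simps power_mult_distrib)
  finally show ?thesis
    by simp
qed

lemma integral_circle_annulus_shift:
  fixes \<Phi> :: "complex \<Rightarrow> complex"
  assumes holo: "\<Phi> holomorphic_on S" and S: "open S"
    and annulus: "{z. r \<le> norm z \<and> norm z \<le> 1} \<subseteq> S" and r: "0 < r" "r < 1"
  shows "integral {0..2*pi} (\<lambda>t. \<Phi> (cis t) * cis t ^ m)
       = of_real r ^ m * integral {0..2*pi} (\<lambda>t. \<Phi> (of_real r * cis t) * cis t ^ m)"
proof -
  have "homotopic_loops (S - {0}) (circlepath 0 1) (circlepath 0 r)"
  proof (rule homotopic_loops_linear)
    fix t :: real
    show "closed_segment (circlepath 0 1 t) (circlepath 0 r t) \<subseteq> S - {0}"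
    proof
      fix y
      assume "y \<in> closed_segment (circlepath 0 1 t) (circlepath 0 r t)"
      then obtain u where u: "0 \<le> u" "u \<le> 1"
        and y: "y = of_real ((1 - u) + u * r) * exp (2 * of_real pi * \<i> * of_real t)"
        unfolding closed_segment_def circlepath by (auto simp: scaleR_conv_of_real algebra_simps)
      have "0 \<le> (1 - u) * (1 - r)" "u * r \<le> u"
        using u r by (auto intro: mult_left_le)
      then have "r \<le> (1 - u) + u * r" "(1 - u) + u * r \<le> 1"
        by (auto simp: algebra_simps)
      moreover from this have "norm y = (1 - u) + u * r"
        using r unfolding y norm_mult norm_of_real by (simp add: norm_exp_eq_Re)
      ultimately show "y \<in> S - {0}"
        using annulus r by auto
    qed
  qed auto
  then have "contour_integral (circlepath 0 1) (\<lambda>z. \<Phi> z * z ^ m / z)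
      = contour_integral (circlepath 0 r) (\<lambda>z. \<Phi> z * z ^ m / z)"
    by (rule Cauchy_theorem_homotopic_loops)
       (use S in \<open>auto intro!: holomorphic_intros holomorphic_on_subset[OF holo]\<close>)
  then show ?thesis
    using contour_integral_circlepath_0[of 1 \<Phi> m] contour_integral_circlepath_0[of r \<Phi> m] r by simp
qed

lemma integral_circle_coeff_decay:
  fixes \<Phi> :: "complex \<Rightarrow> complex"
  assumes holo: "\<Phi> holomorphic_on S" and S: "open S"
    and annulus: "{z. r \<le> norm z \<and> norm z \<le> 1} \<subseteq> S" and r: "0 < r" "r < 1"
  shows "\<exists>M. \<forall>m::nat. norm (integral {0..2*pi} (\<lambda>t. \<Phi> (cis t) * cis t ^ m)) \<le> M * r ^ m"
proof -
  have "continuous_on {0..2*pi} (\<lambda>t. \<Phi> (of_real r * cis t))"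
    by (rule continuous_on_compose2[OF holomorphic_on_imp_continuous_on[OF holo]])
       (use annulus r in \<open>auto intro!: continuous_intros simp: cis_conv_exp norm_mult\<close>)
  then obtain B where B: "\<And>t. t \<in> {0..2*pi} \<Longrightarrow> norm (\<Phi> (of_real r * cis t)) \<le> B"
    using compact_continuous_image[of "{0..2*pi}"] compact_imp_bounded bounded_iff
    by (metis compact_Icc imageI)
  have "norm (integral {0..2*pi} (\<lambda>t. \<Phi> (of_real r * cis t) * cis t ^ m)) \<le> B * (2*pi - 0)"
    for m :: nat
  proof (rule integral_bound)
    show "continuous_on {0..2*pi} (\<lambda>t. \<Phi> (of_real r * cis t) * cis t ^ m)"
      using \<open>continuous_on {0..2*pi} _\<close> by (auto intro!: continuous_intros simp: cis_conv_exp)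
  qed (use B in \<open>auto simp: norm_mult norm_power\<close>)
  then have "norm (integral {0..2*pi} (\<lambda>t. \<Phi> (cis t) * cis t ^ m)) \<le> (B * (2*pi)) * r ^ m" for m :: nat
    using integral_circle_annulus_shift[OF holo S annulus r, of m] r
    by (simp add: norm_mult norm_power mult.commute mult_left_mono)
  then show ?thesis
    by blast
qed

lemma integral_0_2pi_fold:
  fixes h :: "real \<Rightarrow> complex"
  assumes "continuous_on UNIV h"
  shows "integral {0..2*pi} h = integral {0..pi} (\<lambda>t. h t + h (2*pi - t))"
proof -
  have integrable: "h integrable_on {a..b}" for a b
    by (rule integrable_continuous_real) (rule continuous_on_subset[OF assms], simp)
  have "integral {pi..2*pi} h = integral {-pi..0} (\<lambda>t. h (2*pi + t))"
    using integral_shift_Icc_real[of "-pi" 0 h "2*pi"] by (simp add: o_def)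
  also have "\<dots> = integral {0..pi} (\<lambda>t. h (2*pi - t))"
    using Henstock_Kurzweil_Integration.integral_reflect_real[where a = 0 and b = pi and f = "\<lambda>t. h (2*pi - t)"]
    by simp
  finally have reflect: "integral {pi..2*pi} h = integral {0..pi} (\<lambda>t. h (2*pi - t))" .
  have reflected: "(\<lambda>t. h (2*pi - t)) integrable_on {0..pi}"
    by (intro integrable_continuous_real continuous_on_compose2[OF assms]) (auto intro!: continuous_intros)
  have "integral {0..2*pi} h = integral {0..pi} h + integral {pi..2*pi} h"
    by (rule Henstock_Kurzweil_Integration.integral_combine[symmetric]) (use integrable pi_gt_zero in auto)
  also have "\<dots> = integral {0..pi} (\<lambda>t. h t + h (2*pi - t))"
    using integral_add[OF integrable[of 0 pi] reflected] reflect by simp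
  finally show ?thesis .
qed

lemma integral_circle_fold:
  fixes \<Phi> :: "complex \<Rightarrow> complex"
  assumes "continuous_on UNIV (\<lambda>t. \<Phi> (cis t))"
  shows "integral {0..2*pi} (\<lambda>t. \<Phi> (cis t) * cis t ^ m)
       = integral {0..pi} (\<lambda>t. \<Phi> (cis t) * cis (m * t) + \<Phi> (cis (- t)) * cis (- (m * t)))"
proof -
  have "integral {0..2*pi} (\<lambda>t. \<Phi> (cis t) * cis t ^ m)
      = integral {0..pi} (\<lambda>t. \<Phi> (cis t) * cis t ^ m + \<Phi> (cis (2*pi - t)) * cis (2*pi - t) ^ m)"
  proof (rule integral_0_2pi_fold)
    have "continuous_on UNIV (\<lambda>t. cis t ^ m)"
      by (auto intro!: continuous_intros simp: cis_conv_exp)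
    then show "continuous_on UNIV (\<lambda>t. \<Phi> (cis t) * cis t ^ m)"
      by (intro continuous_on_mult assms)
  qed
  moreover have "cis (2*pi - t) = cis (- t)" for t
    by (simp add: complex_eq_iff)
  ultimately show ?thesis
    by (simp add: Complex.DeMoivre)
qed

lemma integral_complex_of_real_continuous:
  fixes f :: "real \<Rightarrow> real"
  assumes "continuous_on {a..b} f"
  shows "integral {a..b} (\<lambda>t. complex_of_real (f t)) = of_real (integral {a..b} f)"
  using integrable_continuous_real[OF assms] by (intro integral_unique has_integral_of_real integrable_integral)

lemma continuous_on_circle_holomorphic:
  assumes "\<Phi> holomorphic_on S" "sphere 0 1 \<subseteq> S"
  shows "continuous_on UNIV (\<lambda>t. \<Phi> (cis t))"
  by (rule continuous_on_compose2[OF holomorphic_on_imp_continuous_on[OF assms(1)]])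
     (use assms(2) in \<open>auto intro!: continuous_intros simp: cis_conv_exp\<close>)

lemma holomorphic_cos_coeff_decay:
  fixes \<Phi> :: "complex \<Rightarrow> complex" and g :: "real \<Rightarrow> real"
  assumes holo: "\<Phi> holomorphic_on S" and S: "open S"
    and annulus: "{z. r \<le> norm z \<and> norm z \<le> 1} \<subseteq> S" and r: "0 < r" "r < 1"
    and real: "\<And>\<theta>. \<Phi> (cis \<theta>) = of_real (g \<theta>)" and even: "\<And>\<theta>. \<Phi> (cis (- \<theta>)) = \<Phi> (cis \<theta>)"
  shows "\<exists>M. \<forall>m::nat. \<bar>integral {0..pi} (\<lambda>\<theta>. g \<theta> * cos (m * \<theta>))\<bar> \<le> M * r ^ m"
proof -
  obtain M where M: "\<And>m::nat. norm (integral {0..2*pi} (\<lambda>t. \<Phi> (cis t) * cis t ^ m)) \<le> M * r ^ m"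
    using integral_circle_coeff_decay[OF holo S annulus r] by blast
  have cont: "continuous_on UNIV (\<lambda>t. \<Phi> (cis t))"
    by (rule continuous_on_circle_holomorphic[OF holo]) (use annulus r in auto)
  then have "continuous_on UNIV (\<lambda>t. Re (\<Phi> (cis t)))"
    by (intro continuous_intros)
  then have cont_g: "continuous_on {0..pi} (\<lambda>t. g t * cos (m * t))" for m :: nat
    using real by (auto intro!: continuous_intros intro: continuous_on_subset)
  have fold: "\<Phi> (cis t) * cis (m * t) + \<Phi> (cis (- t)) * cis (- (m * t))
      = 2 * of_real (g t * cos (m * t))" for t :: real and m :: nat
    using even[of t] by (simp add: real complex_eq_iff)
  have "integral {0..2*pi} (\<lambda>t. \<Phi> (cis t) * cis t ^ m)
      = 2 * of_real (integral {0..pi} (\<lambda>\<theta>. g \<theta> * cos (m * \<theta>)))" for m :: nat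
    unfolding integral_circle_fold[OF cont] fold integral_mult_right
      integral_complex_of_real_continuous[OF cont_g] ..
  then show ?thesis
    using M by (intro exI[of _ "M / 2"]) (auto simp: field_simps)
qed

lemma holomorphic_sin_coeff_decay:
  fixes \<Phi> :: "complex \<Rightarrow> complex" and g :: "real \<Rightarrow> real"
  assumes holo: "\<Phi> holomorphic_on S" and S: "open S"
    and annulus: "{z. r \<le> norm z \<and> norm z \<le> 1} \<subseteq> S" and r: "0 < r" "r < 1"
    and real: "\<And>\<theta>. \<Phi> (cis \<theta>) = of_real (g \<theta>)" and odd: "\<And>\<theta>. \<Phi> (cis (- \<theta>)) = - \<Phi> (cis \<theta>)"
  shows "\<exists>M. \<forall>m::nat. \<bar>integral {0..pi} (\<lambda>\<theta>. g \<theta> * sin (m * \<theta>))\<bar> \<le> M * r ^ m"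
proof -
  obtain M where M: "\<And>m::nat. norm (integral {0..2*pi} (\<lambda>t. \<Phi> (cis t) * cis t ^ m)) \<le> M * r ^ m"
    using integral_circle_coeff_decay[OF holo S annulus r] by blast
  have cont: "continuous_on UNIV (\<lambda>t. \<Phi> (cis t))"
    by (rule continuous_on_circle_holomorphic[OF holo]) (use annulus r in auto)
  then have "continuous_on UNIV (\<lambda>t. Re (\<Phi> (cis t)))"
    by (intro continuous_intros)
  then have cont_g: "continuous_on {0..pi} (\<lambda>t. g t * sin (m * t))" for m :: nat
    using real by (auto intro!: continuous_intros intro: continuous_on_subset)
  have fold: "\<Phi> (cis t) * cis (m * t) + \<Phi> (cis (- t)) * cis (- (m * t))
      = (2 * \<i>) * of_real (g t * sin (m * t))" for t :: real and m :: nat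
    using odd[of t] by (simp add: real complex_eq_iff)
  have "integral {0..2*pi} (\<lambda>t. \<Phi> (cis t) * cis t ^ m)
      = (2 * \<i>) * of_real (integral {0..pi} (\<lambda>\<theta>. g \<theta> * sin (m * \<theta>)))" for m :: nat
    unfolding integral_circle_fold[OF cont] fold integral_mult_right
      integral_complex_of_real_continuous[OF cont_g] ..
  then show ?thesis
    using M by (intro exI[of _ "M / 2"]) (auto simp: norm_mult field_simps)
qed

section \<open>The weight and its holomorphic extension\<close>

definition zcos :: "complex \<Rightarrow> complex" where
  "zcos z = (z + inverse z) / 2"

definition zsin :: "complex \<Rightarrow> complex" where
  "zsin z = (z - inverse z) / (2 * \<i>)"

lemma zcos_cis [simp]: "zcos (cis \<theta>) = of_real (cos \<theta>)"
  by (simp add: zcos_def complex_eq_iff)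

lemma zsin_cis [simp]: "zsin (cis \<theta>) = of_real (sin \<theta>)"
  by (simp add: zsin_def complex_eq_iff)

lemma zcos_inverse [simp]: "zcos (inverse z) = zcos z"
  by (simp add: zcos_def add.commute)

lemma zsin_inverse [simp]: "zsin (inverse z) = - zsin z"
  by (simp add: zsin_def field_simps)

definition qannulus :: "real \<Rightarrow> complex set" where
  "qannulus q = {z. sqrt q < norm z \<and> norm z < 1 / sqrt q}"

lemma open_qannulus: "open (qannulus q)"
proof -
  have "qannulus q = norm -` {sqrt q<..<1 / sqrt q}"
    unfolding qannulus_def by auto
  then show ?thesis
    by (simp add: continuous_open_vimage)
qed

lemma qannulus_inverse:
  assumes "0 < q" "z \<in> qannulus q"
  shows "inverse z \<in> qannulus q"
proof -
  have "0 < sqrt q" "0 < norm z"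
    using assms by (auto simp: qannulus_def)
  with assms show ?thesis
    by (auto simp: qannulus_def norm_divide field_simps)
qed

lemma qannulus_nonzero: "0 \<le> q \<Longrightarrow> z \<in> qannulus q \<Longrightarrow> z \<noteq> 0"
  by (auto simp: qannulus_def)

lemma qannulus_square_bound:
  assumes "0 < q" "z \<in> qannulus q"
  shows "q * norm (z ^ 2) < 1"
proof -
  have "sqrt q * norm z < 1"
    using assms by (simp add: qannulus_def field_simps)
  then have "(sqrt q * norm z) ^ 2 < 1"
    using assms by (simp add: power_less_one_iff)
  then show ?thesis
    using assms by (simp add: power_mult_distrib norm_power)
qed

lemma qannulus_superset_annulus:
  assumes "0 < q" "sqrt q < r"
  shows "{z. r \<le> norm z \<and> norm z \<le> 1} \<subseteq> qannulus q"
proof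
  fix z :: complex
  assume z: "z \<in> {z. r \<le> norm z \<and> norm z \<le> 1}"
  then have "sqrt q < 1"
    using assms(2) by (simp only: mem_Collect_eq) linarith
  moreover have "sqrt q * norm z \<le> sqrt q"
    using z assms by (intro mult_left_le) auto
  ultimately have "sqrt q * norm z < 1"
    by linarith
  then show "z \<in> qannulus q"
    using z assms by (auto simp: qannulus_def field_simps)
qed

definition qratio :: "real \<Rightarrow> complex \<Rightarrow> complex" where
  "qratio q w = cqpoch_inf (of_real q * w) (of_real q) / cqpoch_inf (- of_real q * w) (of_real q)"

lemma qratio_cnj:
  assumes "0 < q" "q < 1"
  shows "qratio q (cnj w) = cnj (qratio q w)"
  using assms cnj_cqpoch_inf[of q "of_real q * w"] cnj_cqpoch_inf[of q "- of_real q * w"]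
  by (simp add: qratio_def)

lemma qratio_holomorphic [holomorphic_intros]:
  assumes "0 < q" "q < 1" "g holomorphic_on A" "\<And>z. z \<in> A \<Longrightarrow> q * norm (g z) < 1"
  shows "(\<lambda>z. qratio q (g z)) holomorphic_on A"
  unfolding qratio_def using assms
  by (intro holomorphic_intros cqpoch_inf_nonzero) (auto simp: norm_mult)

lemma qpar_pos: "0 < qpar \<kappa>"
  by (simp add: qpar_def)

lemma qpar_less_one: "0 < \<kappa> \<Longrightarrow> qpar \<kappa> < 1"
  by (simp add: qpar_def)

lemma Ppoly_eq_qcoef:
  "Ppoly \<kappa> n \<theta> = sqrt (gam \<kappa> 1 / gam \<kappa> n) *
     (\<Sum>j<n. qcoef (qpar \<kappa>) j * qcoef (qpar \<kappa>) (n - 1 - j) * cos ((2 * real j - real n + 1) * \<theta>))"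
  by (simp add: Ppoly_def qcoef_def)

definition Ppoly_ext :: "real \<Rightarrow> nat \<Rightarrow> complex \<Rightarrow> complex" where
  "Ppoly_ext \<kappa> n z = of_real (sqrt (gam \<kappa> 1 / gam \<kappa> n)) *
     (\<Sum>j<n. of_real (qcoef (qpar \<kappa>) j * qcoef (qpar \<kappa>) (n - 1 - j)) * zcos (z ^ (2 * j) / z ^ (n - 1)))"

lemma Ppoly_ext_cis: "Ppoly_ext \<kappa> n (cis \<theta>) = of_real (Ppoly \<kappa> n \<theta>)"
proof -
  have "cis \<theta> ^ (2 * j) / cis \<theta> ^ (n - 1) = cis ((2 * real j - real n + 1) * \<theta>)" if "j < n" for j
  proof -
    have "real (n - 1) = real n - 1"
      using that by (simp add: of_nat_diff)
    then show ?thesis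
      by (simp add: Complex.DeMoivre cis_divide algebra_simps)
  qed
  then show ?thesis
    unfolding Ppoly_ext_def Ppoly_eq_qcoef by simp
qed

lemma Ppoly_ext_inverse: "Ppoly_ext \<kappa> n (inverse z) = Ppoly_ext \<kappa> n z"
proof -
  have "inverse z ^ a / inverse z ^ b = inverse (z ^ a / z ^ b)" for a b
    by (simp add: power_inverse divide_inverse mult.commute)
  then have "zcos (inverse z ^ a / inverse z ^ b) = zcos (z ^ a / z ^ b)" for a b
    by (simp only: zcos_inverse)
  then show ?thesis
    by (simp add: Ppoly_ext_def)
qed

definition weight :: "real \<Rightarrow> nat \<Rightarrow> real \<Rightarrow> real \<Rightarrow> real" where
  "weight \<kappa> n t \<theta> = 2 / (pi * gam \<kappa> 1) * (cmod (qratio (qpar \<kappa>) 1))\<^sup>2 *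
     exp (- t * (1 - cos \<theta>)) * Ppoly \<kappa> n \<theta> * (cmod (qratio (qpar \<kappa>) (cis \<theta> ^ 2)))\<^sup>2"

(* On the unit circle qratio q (z^-2) is the conjugate of qratio q (z^2) (see weight_ext_cis),
   so their product extends |qratio q (e^(2 i theta))|^2 holomorphically off the circle. *)
definition weight_ext :: "real \<Rightarrow> nat \<Rightarrow> real \<Rightarrow> complex \<Rightarrow> complex" where
  "weight_ext \<kappa> n t z = of_real (2 / (pi * gam \<kappa> 1) * (cmod (qratio (qpar \<kappa>) 1))\<^sup>2) *
     exp (- of_real t * (1 - zcos z)) * Ppoly_ext \<kappa> n z *
     qratio (qpar \<kappa>) (z ^ 2) * qratio (qpar \<kappa>) (inverse z ^ 2)"

lemma integrand_eq_weight:
  "exp (- t * (1 - cos \<theta>)) * Ppoly \<kappa> n \<theta> * mu_dens \<kappa> \<theta> = (sin \<theta>)\<^sup>2 * weight \<kappa> n t \<theta>"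
proof -
  have "exp (2 * \<i> * complex_of_real \<theta>) = cis \<theta> ^ 2"
    by (simp add: cis_conv_exp mult.assoc flip: exp_of_nat_mult)
  then show ?thesis
    by (simp add: weight_def mu_dens_def qratio_def norm_mult norm_divide power_mult_distrib
        power_divide mult_ac)
qed

lemma weight_ext_cis:
  assumes "0 < \<kappa>"
  shows "weight_ext \<kappa> n t (cis \<theta>) = of_real (weight \<kappa> n t \<theta>)"
proof -
  have "qratio (qpar \<kappa>) (inverse (cis \<theta>) ^ 2) = cnj (qratio (qpar \<kappa>) (cis \<theta> ^ 2))"
    using qratio_cnj[OF qpar_pos qpar_less_one[OF assms], of "cis \<theta> ^ 2"] by (simp add: cis_cnj)
  then have "qratio (qpar \<kappa>) (cis \<theta> ^ 2) * qratio (qpar \<kappa>) (inverse (cis \<theta>) ^ 2)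
      = of_real ((cmod (qratio (qpar \<kappa>) (cis \<theta> ^ 2)))\<^sup>2)"
    by (simp only: complex_norm_square)
  then show ?thesis
    unfolding weight_ext_def weight_def
    by (simp add: Ppoly_ext_cis mult.assoc flip: exp_of_real)
qed

lemma weight_ext_inverse: "weight_ext \<kappa> n t (inverse z) = weight_ext \<kappa> n t z"
  by (simp add: weight_ext_def Ppoly_ext_inverse mult_ac)

lemma weight_ext_holomorphic:
  assumes "0 < \<kappa>"
  shows "weight_ext \<kappa> n t holomorphic_on qannulus (qpar \<kappa>)"
proof -
  note q = qpar_pos[of \<kappa>] qpar_less_one[OF assms]
  have annulus: "z \<noteq> 0" "qpar \<kappa> * norm (z ^ 2) < 1" "qpar \<kappa> * norm (inverse z ^ 2) < 1"
    if "z \<in> qannulus (qpar \<kappa>)" for z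
    using qannulus_nonzero[OF less_imp_le[OF q(1)] that] qannulus_square_bound[OF q(1) that]
      qannulus_square_bound[OF q(1) qannulus_inverse[OF q(1) that]] by auto
  show ?thesis
    unfolding weight_ext_def[abs_def] Ppoly_ext_def zcos_def
    by (intro holomorphic_intros q) (auto simp: annulus)
qed

lemma weight_cos_coeff_decay:
  assumes "0 < \<kappa>" "sqrt (qpar \<kappa>) < r" "r < 1"
  shows "\<exists>M. \<forall>m::nat. \<bar>integral {0..pi} (\<lambda>\<theta>. (sin \<theta>)\<^sup>2 * weight \<kappa> n t \<theta> * cos (m * \<theta>))\<bar> \<le> M * r ^ m"
proof (rule holomorphic_cos_coeff_decay)
  show "(\<lambda>z. zsin z ^ 2 * weight_ext \<kappa> n t z) holomorphic_on qannulus (qpar \<kappa>)"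
    unfolding zsin_def
    by (intro holomorphic_intros weight_ext_holomorphic assms)
       (use qannulus_nonzero[OF less_imp_le[OF qpar_pos]] in auto)
  show "zsin (cis \<theta>) ^ 2 * weight_ext \<kappa> n t (cis \<theta>) = of_real ((sin \<theta>)\<^sup>2 * weight \<kappa> n t \<theta>)" for \<theta>
    by (simp add: weight_ext_cis[OF assms(1)])
  show "zsin (cis (- \<theta>)) ^ 2 * weight_ext \<kappa> n t (cis (- \<theta>)) = zsin (cis \<theta>) ^ 2 * weight_ext \<kappa> n t (cis \<theta>)" for \<theta>
    using zsin_inverse[of "cis \<theta>"] weight_ext_inverse[of \<kappa> n t "cis \<theta>"] by (simp add: cis_inverse)
  show "0 < r"
    using assms(2) by (meson le_less_trans real_sqrt_ge_zero qpar_pos less_imp_le)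
qed (use assms qannulus_superset_annulus[OF qpar_pos] open_qannulus in auto)

lemma weight_sin_coeff_decay:
  assumes "0 < \<kappa>" "sqrt (qpar \<kappa>) < r" "r < 1"
  shows "\<exists>M. \<forall>m::nat. \<bar>integral {0..pi} (\<lambda>\<theta>. sin \<theta> * weight \<kappa> n t \<theta> * sin (m * \<theta>))\<bar> \<le> M * r ^ m"
proof (rule holomorphic_sin_coeff_decay)
  show "(\<lambda>z. zsin z * weight_ext \<kappa> n t z) holomorphic_on qannulus (qpar \<kappa>)"
    unfolding zsin_def
    by (intro holomorphic_intros weight_ext_holomorphic assms)
       (use qannulus_nonzero[OF less_imp_le[OF qpar_pos]] in auto)
  show "zsin (cis \<theta>) * weight_ext \<kappa> n t (cis \<theta>) = of_real (sin \<theta> * weight \<kappa> n t \<theta>)" for \<theta>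
    by (simp add: weight_ext_cis[OF assms(1)])
  show "zsin (cis (- \<theta>)) * weight_ext \<kappa> n t (cis (- \<theta>)) = - (zsin (cis \<theta>) * weight_ext \<kappa> n t (cis \<theta>))" for \<theta>
    using zsin_inverse[of "cis \<theta>"] weight_ext_inverse[of \<kappa> n t "cis \<theta>"] by (simp add: cis_inverse)
  show "0 < r"
    using assms(2) by (meson le_less_trans real_sqrt_ge_zero qpar_pos less_imp_le)
qed (use assms qannulus_superset_annulus[OF qpar_pos] open_qannulus in auto)

section \<open>Cosine sums against coefficients that decay geometrically\<close>

lemma sin_times_sum_cos:
  "sin x * (\<Sum>j<k. cos ((2 * real j - real k + 1) * x)) = sin (real k * x)"
proof -
  define s where "s j = sin ((2 * real j - real k) * x)" for j :: nat
  have "2 * (sin x * cos ((2 * real j - real k + 1) * x)) = s (Suc j) - s j" for j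
  proof -
    have "(2 * real (Suc j) - real k) * x = (2 * real j - real k + 1) * x + x"
      and "(2 * real j - real k) * x = (2 * real j - real k + 1) * x - x"
      by (simp_all add: algebra_simps)
    then show ?thesis
      by (simp only: s_def sin_add sin_diff) (simp add: algebra_simps)
  qed
  then have "2 * (sin x * (\<Sum>j<k. cos ((2 * real j - real k + 1) * x))) = (\<Sum>j<k. s (Suc j) - s j)"
    by (simp add: sum_distrib_left)
  also have "\<dots> = 2 * sin (real k * x)"
    by (simp only: sum_lessThan_telescope) (simp add: s_def algebra_simps)
  finally show ?thesis
    by simp
qed

lemma integral_sin2_cos_sum:
  fixes W :: "real \<Rightarrow> real" and b :: "nat \<Rightarrow> real" and k :: nat
  assumes W: "continuous_on {0..pi} W"
  defines "I j \<equiv> integral {0..pi} (\<lambda>\<theta>. (sin \<theta>)\<^sup>2 * W \<theta> * cos ((2 * real j - real k + 1) * \<theta>))"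
  shows "integral {0..pi} (\<lambda>\<theta>. (sin \<theta>)\<^sup>2 * W \<theta> * (\<Sum>j<k. b j * cos ((2 * real j - real k + 1) * \<theta>)))
       = A * integral {0..pi} (\<lambda>\<theta>. sin \<theta> * W \<theta> * sin (real k * \<theta>)) + (\<Sum>j<k. (b j - A) * I j)"
proof -
  have int: "(\<lambda>\<theta>. c * ((sin \<theta>)\<^sup>2 * W \<theta> * cos ((2 * real j - real k + 1) * \<theta>))) integrable_on {0..pi}"
    for c j
    by (intro integrable_continuous_real continuous_intros W)
  have "sin \<theta> * W \<theta> * sin (real k * \<theta>) = (\<Sum>j<k. (sin \<theta>)\<^sup>2 * W \<theta> * cos ((2 * real j - real k + 1) * \<theta>))"
    for \<theta>
    unfolding sin_times_sum_cos[symmetric] by (simp add: sum_distrib_left power2_eq_square mult_ac)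
  then have sum_I: "integral {0..pi} (\<lambda>\<theta>. sin \<theta> * W \<theta> * sin (real k * \<theta>)) = (\<Sum>j<k. I j)"
    unfolding I_def using int[of 1] by (simp add: integral_sum)
  have "integral {0..pi} (\<lambda>\<theta>. (sin \<theta>)\<^sup>2 * W \<theta> * (\<Sum>j<k. b j * cos ((2 * real j - real k + 1) * \<theta>)))
      = integral {0..pi} (\<lambda>\<theta>. \<Sum>j<k. b j * ((sin \<theta>)\<^sup>2 * W \<theta> * cos ((2 * real j - real k + 1) * \<theta>)))"
    by (simp add: sum_distrib_left mult_ac)
  also have "\<dots> = (\<Sum>j<k. b j * I j)"
    unfolding I_def by (subst integral_sum) (use int in \<open>auto simp: integral_mult_right\<close>)
  finally show ?thesis
    unfolding sum_I
    by (simp add: sum_distrib_left algebra_simps sum.distrib sum_subtractf)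
qed

(* Split b j = A + (b j - A). The j-th error term is at most D (\<tau>^2j + \<tau>^2(k-1-j)) times a Fourier
   coefficient of index |2j-k+1|, hence of size \<tau>^2|2j-k+1|; since j + |2j-k+1| and
   k-1-j + |2j-k+1| are both at least (k-1)/2, every error term is O(\<tau>^(k-1)). *)
lemma integral_sin2_cos_sum_bound:
  fixes W :: "real \<Rightarrow> real" and b :: "nat \<Rightarrow> real" and \<tau> :: real
  assumes W: "continuous_on {0..pi} W" and \<tau>: "0 < \<tau>" "\<tau> \<le> 1" and k: "1 \<le> k"
    and M1: "\<And>m::nat. \<bar>integral {0..pi} (\<lambda>\<theta>. (sin \<theta>)\<^sup>2 * W \<theta> * cos (m * \<theta>))\<bar> \<le> M1 * (\<tau>\<^sup>2) ^ m"
    and M2: "\<bar>integral {0..pi} (\<lambda>\<theta>. sin \<theta> * W \<theta> * sin (real k * \<theta>))\<bar> \<le> M2 * (\<tau>\<^sup>2) ^ k"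
    and b: "\<And>j. j < k \<Longrightarrow> \<bar>b j - A\<bar> \<le> D * ((\<tau>\<^sup>2) ^ j + (\<tau>\<^sup>2) ^ (k - 1 - j))"
    and A: "\<bar>A\<bar> \<le> B"
  shows "\<bar>integral {0..pi} (\<lambda>\<theta>. (sin \<theta>)\<^sup>2 * W \<theta> * (\<Sum>j<k. b j * cos ((2 * real j - real k + 1) * \<theta>)))\<bar>
       \<le> (B * M2 + 2 * D * M1) * (real k * \<tau> ^ (k - 1))"
proof -
  define I where "I j = integral {0..pi} (\<lambda>\<theta>. (sin \<theta>)\<^sup>2 * W \<theta> * cos ((2 * real j - real k + 1) * \<theta>))"
    for j
  define J where "J = integral {0..pi} (\<lambda>\<theta>. sin \<theta> * W \<theta> * sin (real k * \<theta>))"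
  define e where "e j = nat \<bar>2 * int j - int k + 1\<bar>" for j
  have M1_nonneg: "0 \<le> M1"
    using M1[of 0] by simp
  have "0 \<le> M2 * (\<tau>\<^sup>2) ^ k"
    using M2 by (rule order_trans[OF abs_ge_zero])
  moreover have "0 < (\<tau>\<^sup>2) ^ k"
    using \<tau> by simp
  ultimately have M2_nonneg: "0 \<le> M2"
    by (simp add: zero_le_mult_iff)
  have "0 \<le> D * ((\<tau>\<^sup>2) ^ 0 + (\<tau>\<^sup>2) ^ (k - 1))"
    using b[of 0] k by (intro order_trans[OF abs_ge_zero]) auto
  moreover have "0 < (\<tau>\<^sup>2) ^ 0 + (\<tau>\<^sup>2) ^ (k - 1)"
    using \<tau> by (intro add_pos_pos) auto
  ultimately have D_nonneg: "0 \<le> D"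
    by (simp only: zero_le_mult_iff) auto
  have I: "\<bar>I j\<bar> \<le> M1 * (\<tau>\<^sup>2) ^ e j" for j
  proof -
    have "real (e j) = \<bar>2 * real j - real k + 1\<bar>"
      by (simp add: e_def)
    moreover have "cos (\<bar>x\<bar> * \<theta>) = cos (x * \<theta>)" for x \<theta> :: real
      by (cases "0 \<le> x") (simp_all add: abs_of_neg)
    ultimately have "cos ((2 * real j - real k + 1) * \<theta>) = cos (real (e j) * \<theta>)" for \<theta>
      by simp
    then show ?thesis
      unfolding I_def using M1[of "e j"] by simp
  qed
  have decay: "(\<tau>\<^sup>2) ^ i * (\<tau>\<^sup>2) ^ e j \<le> \<tau> ^ (k - 1)" if "k - 1 \<le> 2 * (i + e j)" for i j
  proof -
    have "(\<tau>\<^sup>2) ^ i * (\<tau>\<^sup>2) ^ e j = \<tau> ^ (2 * (i + e j))"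
      by (simp add: power_add power_mult)
    also have "\<dots> \<le> \<tau> ^ (k - 1)"
      using \<tau> that by (intro power_decreasing) auto
    finally show ?thesis .
  qed
  have exps: "k - 1 \<le> 2 * (j + e j)" "k - 1 \<le> 2 * (k - 1 - j + e j)" if "j < k" for j
    using that unfolding e_def by (simp_all split: abs_split)
  have "\<bar>(b j - A) * I j\<bar> \<le> 2 * D * M1 * \<tau> ^ (k - 1)" if "j < k" for j
  proof -
    have "\<bar>(b j - A) * I j\<bar> \<le> D * ((\<tau>\<^sup>2) ^ j + (\<tau>\<^sup>2) ^ (k - 1 - j)) * (M1 * (\<tau>\<^sup>2) ^ e j)"
      unfolding abs_mult using b[OF that] I by (intro mult_mono) auto
    also have "\<dots> = D * M1 * ((\<tau>\<^sup>2) ^ j * (\<tau>\<^sup>2) ^ e j + (\<tau>\<^sup>2) ^ (k - 1 - j) * (\<tau>\<^sup>2) ^ e j)"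
      by (simp add: algebra_simps)
    also have "\<dots> \<le> D * M1 * (\<tau> ^ (k - 1) + \<tau> ^ (k - 1))"
      using decay[OF exps(1)[OF that]] decay[OF exps(2)[OF that]] D_nonneg M1_nonneg
      by (intro mult_left_mono add_mono) auto
    finally show ?thesis
      by simp
  qed
  then have "\<bar>\<Sum>j<k. (b j - A) * I j\<bar> \<le> (\<Sum>j<k. 2 * D * M1 * \<tau> ^ (k - 1))"
    by (intro order_trans[OF sum_abs] sum_mono) auto
  then have sum_bound: "\<bar>\<Sum>j<k. (b j - A) * I j\<bar> \<le> real k * (2 * D * M1 * \<tau> ^ (k - 1))"
    by simp
  have "(\<tau>\<^sup>2) ^ k \<le> \<tau> ^ (k - 1)"
    using \<tau> by (simp add: power_decreasing flip: power_mult)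
  then have "\<bar>A * J\<bar> \<le> B * (M2 * \<tau> ^ (k - 1))"
    unfolding abs_mult J_def using A M2 M2_nonneg
    by (intro mult_mono order_trans[OF M2] mult_left_mono) auto
  also have "\<dots> \<le> real k * (B * M2 * \<tau> ^ (k - 1))"
    using mult_right_mono[of 1 "real k" "B * M2 * \<tau> ^ (k - 1)"] k A M2_nonneg \<tau> by simp
  finally have "\<bar>A * J + (\<Sum>j<k. (b j - A) * I j)\<bar>
      \<le> real k * (B * M2 * \<tau> ^ (k - 1)) + real k * (2 * D * M1 * \<tau> ^ (k - 1))"
    using sum_bound by (intro order_trans[OF abs_triangle_ineq] add_mono)
  then show ?thesis
    unfolding integral_sin2_cos_sum[OF W, where k = k and b = b and A = A] I_def[symmetric] J_def[symmetric]
    by (simp add: algebra_simps)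
qed

section \<open>Decay of \<open>qsol\<close> in \<open>k\<close>\<close>

lemma polynomial_times_geometric_bounded:
  fixes \<tau> :: real
  assumes "0 < \<tau>" "\<tau> < 1"
  shows "\<exists>L. \<forall>k. real k ^ p * \<tau> ^ k \<le> L"
proof (cases "p = 0")
  case True
  then show ?thesis
    using assms by (intro exI[of _ 1]) (auto simp: power_le_one)
next
  case False
  define \<sigma> where "\<sigma> = root p \<tau>"
  have \<sigma>: "0 < \<sigma>" "\<sigma> < 1" "\<sigma> ^ p = \<tau>"
    unfolding \<sigma>_def using assms False by (auto simp: real_root_lt_1_iff)
  have "(\<lambda>k. real k * \<sigma> ^ k) \<longlonglongrightarrow> 0"
    using powser_times_n_limit_0[of \<sigma>] \<sigma> by simp
  then have "(\<lambda>k. (real k * \<sigma> ^ k) ^ p) \<longlonglongrightarrow> 0"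
    using False tendsto_power[of _ 0] by (metis power_0_left)
  moreover have "(real k * \<sigma> ^ k) ^ p = real k ^ p * \<tau> ^ k" for k
    unfolding \<sigma>(3)[symmetric] by (simp add: power_mult_distrib flip: power_mult) (simp add: mult.commute)
  ultimately have "Bseq (\<lambda>k. real k ^ p * \<tau> ^ k)"
    using convergent_imp_Bseq convergentI by force
  then show ?thesis
    by (auto simp: Bseq_def intro: order.trans[OF abs_ge_self])
qed

lemma linear_geometric_le_inverse_power:
  fixes \<tau> :: real
  assumes "0 < \<tau>" "\<tau> < 1"
  shows "\<exists>C. \<forall>k\<ge>1. real k * \<tau> ^ (k - 1) \<le> C / real k ^ l"
proof -
  obtain L where L: "\<And>k. real k ^ (l + 1) * \<tau> ^ k \<le> L"
    using polynomial_times_geometric_bounded[OF assms] by blast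
  have "real k * \<tau> ^ (k - 1) \<le> (L / \<tau>) / real k ^ l" if "k \<ge> 1" for k
  proof -
    have "(real k * \<tau> ^ (k - 1)) * (real k ^ l * \<tau>) = real k ^ (l + 1) * \<tau> ^ k"
      using that by (cases k) (simp_all add: algebra_simps)
    then have "(real k * \<tau> ^ (k - 1)) * (real k ^ l * \<tau>) \<le> L"
      using L[of k] by (simp only:)
    then have "real k * \<tau> ^ (k - 1) \<le> L / (real k ^ l * \<tau>)"
      using that assms by (simp add: pos_le_divide_eq del: of_nat_power)
    then show ?thesis
      by (simp add: divide_divide_eq_left mult.commute)
  qed
  then show ?thesis
    by blast
qed

lemma continuous_weight:
  assumes "0 < \<kappa>"
  shows "continuous_on UNIV (weight \<kappa> n t)"
proof -
  have "continuous_on UNIV (\<lambda>\<theta>. Re (weight_ext \<kappa> n t (cis \<theta>)))"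
    using qannulus_superset_annulus[OF qpar_pos, of \<kappa> 1] qpar_less_one[OF assms]
    by (intro continuous_intros continuous_on_circle_holomorphic[OF weight_ext_holomorphic[OF assms]]) auto
  then show ?thesis
    by (simp add: weight_ext_cis[OF assms])
qed

lemma qsol_eq_integral:
  assumes "0 < \<kappa>"
  shows "qsol \<kappa> n k t = sqrt (gam \<kappa> n / gam \<kappa> k) * sqrt (gam \<kappa> 1 / gam \<kappa> k) *
           integral {0..pi} (\<lambda>\<theta>. (sin \<theta>)\<^sup>2 * weight \<kappa> n t \<theta> *
             (\<Sum>j<k. qcoef (qpar \<kappa>) j * qcoef (qpar \<kappa>) (k - 1 - j) * cos ((2 * real j - real k + 1) * \<theta>)))"
proof -
  have "(\<lambda>\<theta>. exp (- t * (1 - cos \<theta>)) * Ppoly \<kappa> n \<theta> * Ppoly \<kappa> k \<theta> * mu_dens \<kappa> \<theta>)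
      = (\<lambda>\<theta>. (sin \<theta>)\<^sup>2 * weight \<kappa> n t \<theta> * Ppoly \<kappa> k \<theta>)"
    using integrand_eq_weight by (metis mult.commute mult.left_commute)
  moreover have "continuous_on UNIV (Ppoly \<kappa> k)"
    unfolding Ppoly_def[abs_def] by (intro continuous_intros)
  ultimately have "qsol \<kappa> n k t = sqrt (gam \<kappa> n / gam \<kappa> k) *
      integral {0..pi} (\<lambda>\<theta>. (sin \<theta>)\<^sup>2 * weight \<kappa> n t \<theta> * Ppoly \<kappa> k \<theta>)"
    unfolding qsol_def zero_ereal_def using continuous_weight[OF assms]
    by (subst interval_integral_eq_integral)
       (auto intro!: borel_integrable_atLeastAtMost' continuous_intros intro: continuous_on_subset)
  also have "\<dots> = sqrt (gam \<kappa> n / gam \<kappa> k) * integral {0..pi} (\<lambda>\<theta>. sqrt (gam \<kappa> 1 / gam \<kappa> k) *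
      ((sin \<theta>)\<^sup>2 * weight \<kappa> n t \<theta> *
        (\<Sum>j<k. qcoef (qpar \<kappa>) j * qcoef (qpar \<kappa>) (k - 1 - j) * cos ((2 * real j - real k + 1) * \<theta>))))"
    unfolding Ppoly_eq_qcoef by (simp only: mult_ac)
  finally show ?thesis
    by (simp only: integral_mult_right mult.assoc)
qed

lemma gam_factor_le:
  assumes "0 < \<kappa>" "1 \<le> k"
  shows "sqrt (gam \<kappa> n / gam \<kappa> k) * sqrt (gam \<kappa> 1 / gam \<kappa> k) \<le> sqrt (gam \<kappa> n / gam \<kappa> 1)"
proof -
  have g: "0 < gam \<kappa> 1" "gam \<kappa> 1 \<le> gam \<kappa> k" "0 \<le> gam \<kappa> n"
    using assms by (auto simp: gam_def)
  have "sqrt (gam \<kappa> n / gam \<kappa> k) * sqrt (gam \<kappa> 1 / gam \<kappa> k) = sqrt (gam \<kappa> n * gam \<kappa> 1) / gam \<kappa> k"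
    using g by (simp add: real_sqrt_divide real_sqrt_mult)
  also have "\<dots> \<le> sqrt (gam \<kappa> n * gam \<kappa> 1) / gam \<kappa> 1"
    using g by (intro divide_left_mono) auto
  also have "\<dots> = sqrt (gam \<kappa> n / gam \<kappa> 1)"
    using g by (simp add: real_sqrt_divide real_sqrt_mult field_simps)
  finally show ?thesis .
qed

lemma abs_qsol_le:
  assumes "0 < \<kappa>" "1 \<le> k"
  shows "\<bar>qsol \<kappa> n k t\<bar> \<le> sqrt (gam \<kappa> n / gam \<kappa> 1) *
           \<bar>integral {0..pi} (\<lambda>\<theta>. (sin \<theta>)\<^sup>2 * weight \<kappa> n t \<theta> *
             (\<Sum>j<k. qcoef (qpar \<kappa>) j * qcoef (qpar \<kappa>) (k - 1 - j) * cos ((2 * real j - real k + 1) * \<theta>)))\<bar>"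
  unfolding qsol_eq_integral[OF assms(1)] abs_mult
  using gam_factor_le[OF assms, of n] assms(1) by (intro mult_right_mono) (auto simp: gam_def)

lemma qsol_geometric_decay:
  assumes "0 < \<kappa>"
  shows "\<exists>K \<tau>. 0 < \<tau> \<and> \<tau> < 1 \<and> (\<forall>k\<ge>1. \<bar>qsol \<kappa> n k t\<bar> \<le> K * (real k * \<tau> ^ (k - 1)))"
proof -
  define q where "q = qpar \<kappa>"
  have q: "0 < q" "q < 1"
    unfolding q_def using qpar_pos qpar_less_one[OF assms] by auto
  obtain r where r: "sqrt q < r" "r < 1"
    using q dense[of "sqrt q" 1] by auto
  have "0 < r"
    using order.strict_trans[OF real_sqrt_gt_zero[OF q(1)] r(1)] .
  define \<tau> where "\<tau> = sqrt r"
  have \<tau>: "0 < \<tau>" "\<tau> < 1" "\<tau>\<^sup>2 = r"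
    unfolding \<tau>_def using r \<open>0 < r\<close> by auto
  have "q < sqrt q"
    using q by (simp add: real_less_rsqrt power2_eq_square)
  then have qr: "q ^ j \<le> r ^ j" for j
    using q r by (intro power_mono) auto
  obtain M1 where M1: "\<And>m::nat. \<bar>integral {0..pi} (\<lambda>\<theta>. (sin \<theta>)\<^sup>2 * weight \<kappa> n t \<theta> * cos (m * \<theta>))\<bar> \<le> M1 * r ^ m"
    using weight_cos_coeff_decay[OF assms, of r n t] r unfolding q_def by blast
  obtain M2 where M2: "\<And>m::nat. \<bar>integral {0..pi} (\<lambda>\<theta>. sin \<theta> * weight \<kappa> n t \<theta> * sin (m * \<theta>))\<bar> \<le> M2 * r ^ m"
    using weight_sin_coeff_decay[OF assms, of r n t] r unfolding q_def by blast
  obtain D where D: "0 \<le> D"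
    "\<And>k j. j < k \<Longrightarrow> \<bar>qcoef q j * qcoef q (k - 1 - j) - (qcoef q k)\<^sup>2\<bar> \<le> D * (q ^ j + q ^ (k - 1 - j))"
    using qcoef_product_diff[OF q] by blast
  define B where "B = exp (2 / (1 - q)\<^sup>2) ^ 2"
  define K where "K = sqrt (gam \<kappa> n / gam \<kappa> 1) * (B * M2 + 2 * D * M1)"
  have "\<bar>qsol \<kappa> n k t\<bar> \<le> K * (real k * \<tau> ^ (k - 1))" if k: "1 \<le> k" for k
  proof -
    have "\<bar>integral {0..pi} (\<lambda>\<theta>. (sin \<theta>)\<^sup>2 * weight \<kappa> n t \<theta> *
              (\<Sum>j<k. qcoef q j * qcoef q (k - 1 - j) * cos ((2 * real j - real k + 1) * \<theta>)))\<bar>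
          \<le> (B * M2 + 2 * D * M1) * (real k * \<tau> ^ (k - 1))"
    proof (rule integral_sin2_cos_sum_bound)
      show "\<bar>qcoef q j * qcoef q (k - 1 - j) - (qcoef q k)\<^sup>2\<bar> \<le> D * ((\<tau>\<^sup>2) ^ j + (\<tau>\<^sup>2) ^ (k - 1 - j))"
        if "j < k" for j
        using order_trans[OF D(2)[OF that] mult_left_mono[OF add_mono[OF qr qr] D(1)]] \<tau>(3)
        by simp
      show "\<bar>(qcoef q k)\<^sup>2\<bar> \<le> B"
        unfolding B_def using qcoef_le[OF q, of k] qcoef_pos[OF q, of k] by (simp add: power_mono)
    qed (use continuous_weight[OF assms] M1 M2 \<tau> k in \<open>auto intro: continuous_on_subset\<close>)
    then have "sqrt (gam \<kappa> n / gam \<kappa> 1) * \<bar>integral {0..pi} (\<lambda>\<theta>. (sin \<theta>)\<^sup>2 * weight \<kappa> n t \<theta> *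
              (\<Sum>j<k. qcoef q j * qcoef q (k - 1 - j) * cos ((2 * real j - real k + 1) * \<theta>)))\<bar>
          \<le> K * (real k * \<tau> ^ (k - 1))"
      unfolding K_def mult.assoc using assms by (intro mult_left_mono) (auto simp: gam_def)
    then show ?thesis
      using abs_qsol_le[OF assms k, of n t] unfolding q_def by linarith
  qed
  with \<tau> show ?thesis
    by blast
qed

theorem lemma3p3:
  fixes \<kappa> :: real and l n :: nat and t :: real
  assumes "\<kappa> > 0" and "l \<ge> 1" and "n \<ge> 1" and "t \<ge> 0"
  shows "\<exists>C. \<forall>k::nat. k \<ge> 1 \<longrightarrow> \<bar>qsol \<kappa> n k t\<bar> \<le> C / real k ^ l"
proof -
  obtain K \<tau> where \<tau>: "0 < \<tau>" "\<tau> < 1"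
    and decay: "\<And>k. 1 \<le> k \<Longrightarrow> \<bar>qsol \<kappa> n k t\<bar> \<le> K * (real k * \<tau> ^ (k - 1))"
    using qsol_geometric_decay[OF assms(1)] by blast
  obtain C where C: "\<And>k. 1 \<le> k \<Longrightarrow> real k * \<tau> ^ (k - 1) \<le> C / real k ^ l"
    using linear_geometric_le_inverse_power[OF \<tau>] by blast
  have "0 \<le> K"
    using order_trans[OF abs_ge_zero decay[of 1]] by simp
  have "\<bar>qsol \<kappa> n k t\<bar> \<le> (K * C) / real k ^ l" if "1 \<le> k" for k
    using order_trans[OF decay[OF that] mult_left_mono[OF C[OF that] \<open>0 \<le> K\<close>]] by simp
  then show ?thesis
    by blast
qed

end
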